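(* Let $\mathcal F$ be a Hilbert space with norm-induced metric $d$, $(\phi_i)_{i\in\mathbb N}\subset\mathcal F$, $\pi:\mathbb N\to\mathbb N$ of at most polynomial growth, and $\Sigma^\pi_M=\{\sum_{i\in I}c_i\phi_i:I\subset\{1,\dots,\pi(M)\},|I|\le M,(c_i)\in\mathbb R^I\}$. For $\alpha,\beta>0$ let $$\mathcal A^\alpha(\mathcal F,\Sigma^\pi,\beta)=\{f\in\mathcal F:\|f\|\le\beta\ \text{and}\ \sup_{M\ge1}M^\alpha d(f,\Sigma^\pi_M)\le\beta\},$$ where $d(f,A)=\inf_{g\in A}d(f,g)$. Then $\gamma^*_e(\mathcal A^\alpha(\mathcal F,\Sigma^\pi,\beta))\ge\alpha$.
   Context: A finite $X\subset\mathcal C$ is an $\varepsilon$-covering of $\mathcal C$ if every point of $\mathcal C$ is within distance $\varepsilon$ of some point of $X$; $N(\mathcal C,d,\varepsilon)$ is the minimal size of such a covering ($+\infty$ if none), $H=\log_2N$, and the encoding speed is $\gamma^*_e(\mathcal C)=\sup\{\gamma>0:H(\mathcal C,d,\varepsilon)=O(\varepsilon^{-1/\gamma})\text{ as }\varepsilon\to0\}$ ($0$ if the set is empty). *)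

theory Defs
  imports "HOL-Analysis.Analysis" "HOL-Library.Landau_Symbols" "HOL-Library.Extended_Nat"
begin

definition is_covering :: "'a::metric_space set \<Rightarrow> real \<Rightarrow> 'a set \<Rightarrow> bool" where
  "is_covering C eps X \<longleftrightarrow> finite X \<and> X \<subseteq> C \<and> (\<forall>x\<in>C. \<exists>y\<in>X. dist x y \<le> eps)"

text \<open>Covering number N(C,d,eps); infinity if no finite covering exists.\<close>
definition covering_number :: "'a::metric_space set \<Rightarrow> real \<Rightarrow> enat" where
  "covering_number C eps = Inf {enat (card X) | X. is_covering C eps X}"

text \<open>H(C,d,eps) = O(eps^(-1/gamma)) as eps -> 0 (H is infinite when N is; then the bound fails).\<close>
definition entropy_bound :: "'a::metric_space set \<Rightarrow> real \<Rightarrow> bool" where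
  "entropy_bound C gamma \<longleftrightarrow>
     eventually (\<lambda>eps. covering_number C eps \<noteq> \<infinity>) (at_right 0) \<and>
     (\<lambda>eps. log 2 (real (the_enat (covering_number C eps))))
        \<in> O[at_right 0](\<lambda>eps. eps powr (-1 / gamma))"

definition encoding_speed :: "'a::metric_space set \<Rightarrow> ereal" where
  "encoding_speed C = (if C = {} then 0
     else Sup {ereal gamma | gamma. gamma > 0 \<and> entropy_bound C gamma})"

definition Sigma_pi :: "(nat \<Rightarrow> 'a::real_vector) \<Rightarrow> (nat \<Rightarrow> nat) \<Rightarrow> nat \<Rightarrow> 'a set" where
  "Sigma_pi phi p M = {g. \<exists>I c. I \<subseteq> {1..p M} \<and> card I \<le> M \<and> g = (\<Sum>i\<in>I. c i *\<^sub>R phi i)}"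

definition approx_class :: "real \<Rightarrow> (nat \<Rightarrow> 'a::real_normed_vector) \<Rightarrow> (nat \<Rightarrow> nat) \<Rightarrow> real \<Rightarrow> 'a set" where
  "approx_class alpha phi p beta =
     {f. norm f \<le> beta \<and> (\<forall>M\<ge>1. real M powr alpha * infdist f (Sigma_pi phi p M) \<le> beta)}"

end

theory Submission
  imports Defs "HOL-Real_Asymp.Real_Asymp"
begin

text \<open>An element \<open>f\<close> of the class lies within \<open>\<epsilon>/8\<close> of \<open>\<Sigma>\<^sup>\<pi>\<^sub>M\<close> once \<open>M \<approx> \<epsilon>\<^sup>-\<^sup>1\<^sup>/\<^sup>\<alpha>\<close>.
  There are at most \<open>(\<pi>(M) + 1)\<^sup>M\<close> choices of the index set, and in each of the spanned subspaces
  (of dimension \<open>\<le> M\<close>, with an orthonormal basis from Gram--Schmidt) the ball of radius \<open>\<beta> + 1\<close>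
  is covered by a grid of \<open>O(M/\<epsilon>)\<^sup>M\<close> points. Since \<open>\<pi>\<close> grows polynomially, the logarithm of the
  covering number is \<open>O(\<epsilon>\<^sup>-\<^sup>1\<^sup>/\<^sup>\<alpha> log(1/\<epsilon>)) = O(\<epsilon>\<^sup>-\<^sup>1\<^sup>/\<^sup>\<gamma>)\<close> for every \<open>\<gamma> < \<alpha>\<close>.\<close>

lemma orthonormal_inner:
  fixes B :: "'a::real_inner set"
  assumes "\<forall>b\<in>B. norm b = 1" "pairwise orthogonal B" "b \<in> B" "b' \<in> B"
  shows "b \<bullet> b' = (if b = b' then 1 else 0)"
  using assms by (auto simp: pairwise_def orthogonal_def norm_eq_1)

lemma orthogonal_projection_residual:
  fixes B :: "'a::real_inner set"
  assumes "finite B" "\<forall>b\<in>B. norm b = 1" "pairwise orthogonal B" "b \<in> B"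
  shows "(a - (\<Sum>b'\<in>B. (a \<bullet> b') *\<^sub>R b')) \<bullet> b = 0"
proof -
  have "(\<Sum>b'\<in>B. (a \<bullet> b') *\<^sub>R b') \<bullet> b = (\<Sum>b'\<in>B. if b' = b then a \<bullet> b else 0)"
    unfolding inner_sum_left
    by (rule sum.cong) (auto simp: orthonormal_inner[OF assms(2,3) _ assms(4)])
  also have "\<dots> = a \<bullet> b" using assms(1,4) by simp
  finally show ?thesis by (simp add: inner_diff_left)
qed

text \<open>Gram--Schmidt in an arbitrary real inner product space; the library's version
  (\<open>orthogonal_extension\<close>) is restricted to \<open>euclidean_space\<close>.\<close>
lemma exists_orthonormal_spanning_set:
  fixes S :: "'a::real_inner set"
  assumes "finite S"
  shows "\<exists>B. finite B \<and> card B \<le> card S \<and> (\<forall>b\<in>B. norm b = 1) \<and> pairwise orthogonal B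
           \<and> S \<subseteq> span B"
  using assms
proof (induction S rule: finite_induct)
  case empty
  show ?case by (rule exI[of _ "{}"]) auto
next
  case (insert a S)
  then obtain B where B: "finite B" "card B \<le> card S" "\<forall>b\<in>B. norm b = 1"
    "pairwise orthogonal B" "S \<subseteq> span B" by blast
  define w where "w = a - (\<Sum>b\<in>B. (a \<bullet> b) *\<^sub>R b)"
  have proj_in_span: "(\<Sum>b\<in>B. (a \<bullet> b) *\<^sub>R b) \<in> span B"
    by (intro span_sum span_mul span_base)
  show ?case
  proof (cases "w = 0")
    case True
    then have "a \<in> span B" using proj_in_span by (simp add: w_def)
    then show ?thesis using B insert by (intro exI[of _ B]) auto
  next
    case False
    define u where "u = w /\<^sub>R norm w"
    have norm_u: "norm u = 1" using False by (simp add: u_def)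
    have u_orth: "u \<bullet> b = 0" if "b \<in> B" for b
      using orthogonal_projection_residual[OF B(1,3,4) that] by (simp add: u_def w_def)
    have "u \<notin> B" using u_orth norm_u by (metis inner_eq_zero_iff norm_zero zero_neq_one)
    have "a = norm w *\<^sub>R u + (\<Sum>b\<in>B. (a \<bullet> b) *\<^sub>R b)" using False by (simp add: u_def w_def)
    moreover have "(\<Sum>b\<in>B. (a \<bullet> b) *\<^sub>R b) \<in> span (insert u B)"
      using proj_in_span span_mono[of B "insert u B"] by blast
    ultimately have "a \<in> span (insert u B)"
      by (metis insertI1 span_add span_base span_mul)
    moreover have "S \<subseteq> span (insert u B)" using B(5) span_mono[of B "insert u B"] by auto
    moreover have "pairwise orthogonal (insert u B)"
      using B(4) u_orth by (auto simp: pairwise_insert orthogonal_def inner_commute)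
    moreover have "card (insert u B) \<le> card (insert a S)"
      using B(1,2) insert(1,2) \<open>u \<notin> B\<close> by simp
    ultimately show ?thesis using B(1,3) norm_u by (intro exI[of _ "insert u B"]) auto
  qed
qed

lemma norm_sum_orthonormal:
  fixes B :: "'a::real_inner set"
  assumes "finite B" "\<forall>b\<in>B. norm b = 1" "pairwise orthogonal B"
  shows "(norm (\<Sum>b\<in>B. a b *\<^sub>R b))\<^sup>2 = (\<Sum>b\<in>B. (a b)\<^sup>2)"
proof -
  have "(norm (\<Sum>b\<in>B. a b *\<^sub>R b))\<^sup>2 = (\<Sum>b\<in>B. \<Sum>b'\<in>B. a b * a b' * (b \<bullet> b'))"
    by (simp add: power2_norm_eq_inner inner_sum_left inner_sum_right sum_distrib_left
        mult.assoc inner_commute mult.left_commute)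
  also have "\<dots> = (\<Sum>b\<in>B. \<Sum>b'\<in>B. if b' = b then a b * a b else 0)"
    by (intro sum.cong refl) (auto simp: orthonormal_inner[OF assms(2,3)])
  also have "\<dots> = (\<Sum>b\<in>B. (a b)\<^sup>2)" using assms(1) by (simp add: power2_eq_square)
  finally show ?thesis .
qed

text \<open>Round each coordinate \<open>x \<bullet> b\<close> down to a multiple of \<open>\<delta>\<close>; the error is at most \<open>\<delta>\<close>
  per coordinate, and the coordinates are bounded by \<open>R\<close> by Cauchy--Schwarz.\<close>
lemma orthonormal_grid_net:
  fixes B :: "'a::real_inner set"
  assumes B: "finite B" "\<forall>b\<in>B. norm b = 1" "pairwise orthogonal B"
    and x: "x \<in> span B" "norm x \<le> R" and \<delta>: "\<delta> > 0"
  defines "K \<equiv> \<lceil>R / \<delta>\<rceil>"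
  shows "\<exists>k \<in> B \<rightarrow>\<^sub>E {-K..K}. norm (x - (\<Sum>b\<in>B. (\<delta> * of_int (k b)) *\<^sub>R b))
           \<le> sqrt (card B) * \<delta>"
proof -
  define k where "k = restrict (\<lambda>b. \<lfloor>(x \<bullet> b) / \<delta>\<rfloor>) B"
  have coord_bound: "\<bar>x \<bullet> b\<bar> \<le> R" if "b \<in> B" for b
    using Cauchy_Schwarz_ineq2[of x b] B(2) that x(2) by auto
  have k_range: "k \<in> B \<rightarrow>\<^sub>E {-K..K}"
  proof
    fix b assume b: "b \<in> B"
    have "- (R / \<delta>) \<le> (x \<bullet> b) / \<delta>" "(x \<bullet> b) / \<delta> \<le> R / \<delta>"
      using coord_bound[OF b] \<delta> by (simp_all add: divide_right_mono abs_le_iff field_simps)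
    then have "- K \<le> \<lfloor>(x \<bullet> b) / \<delta>\<rfloor>" "\<lfloor>(x \<bullet> b) / \<delta>\<rfloor> \<le> K"
      unfolding K_def by (simp_all add: le_floor_iff) linarith+
    then show "k b \<in> {-K..K}" using b by (simp add: k_def)
  qed (simp add: k_def)
  have rounding_error: "0 \<le> x \<bullet> b - \<delta> * of_int (k b) \<and> x \<bullet> b - \<delta> * of_int (k b) \<le> \<delta>"
    if "b \<in> B" for b
  proof -
    have "of_int (k b) \<le> (x \<bullet> b) / \<delta>" "(x \<bullet> b) / \<delta> \<le> of_int (k b) + 1"
      using that unfolding k_def by simp_all
    then show ?thesis using \<delta> by (simp add: field_simps)
  qed
  have "x - (\<Sum>b\<in>B. (\<delta> * of_int (k b)) *\<^sub>R b) = (\<Sum>b\<in>B. (x \<bullet> b - \<delta> * of_int (k b)) *\<^sub>R b)"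
    by (subst (1) orthonormal_basis_expand[OF B(3) _ x(1) B(1), symmetric])
      (use B(2) in \<open>auto simp: sum_subtractf scaleR_diff_left\<close>)
  then have "(norm (x - (\<Sum>b\<in>B. (\<delta> * of_int (k b)) *\<^sub>R b)))\<^sup>2
      = (\<Sum>b\<in>B. (x \<bullet> b - \<delta> * of_int (k b))\<^sup>2)"
    using norm_sum_orthonormal[OF B] by simp
  also have "\<dots> \<le> (\<Sum>b\<in>B. \<delta>\<^sup>2)"
    using rounding_error by (intro sum_mono power_mono) auto
  also have "\<dots> = (sqrt (card B) * \<delta>)\<^sup>2" by (simp add: power_mult_distrib)
  finally have "norm (x - (\<Sum>b\<in>B. (\<delta> * of_int (k b)) *\<^sub>R b)) \<le> sqrt (card B) * \<delta>"
    by (rule power2_le_imp_le) (use \<delta> in simp)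
  then show ?thesis using k_range by blast
qed

text \<open>Pad the sorted elements of \<open>I\<close> with zeros to a list of length \<open>M\<close> over \<open>{0..n}\<close>.\<close>
lemma card_bounded_subsets_le: "card {I. I \<subseteq> {1..n::nat} \<and> card I \<le> M} \<le> (n + 1) ^ M"
proof -
  let ?L = "{xs. set xs \<subseteq> {0..n} \<and> length xs = M}"
  have "{I. I \<subseteq> {1..n} \<and> card I \<le> M} \<subseteq> (\<lambda>xs. set xs - {0}) ` ?L"
  proof
    fix I assume I: "I \<in> {I. I \<subseteq> {1..n} \<and> card I \<le> M}"
    then have "finite I" using finite_subset by blast
    define xs where "xs = sorted_list_of_set I @ replicate (M - card I) 0"
    have "xs \<in> ?L" "set xs - {0} = I" using I \<open>finite I\<close> by (auto simp: xs_def)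
    then show "I \<in> (\<lambda>xs. set xs - {0}) ` ?L" by force
  qed
  then have "card {I. I \<subseteq> {1..n} \<and> card I \<le> M} \<le> card ((\<lambda>xs. set xs - {0}) ` ?L)"
    by (intro card_mono finite_imageI) (auto simp: finite_lists_length_eq)
  also have "\<dots> \<le> card ?L" by (intro card_image_le) (auto simp: finite_lists_length_eq)
  also have "\<dots> = (n + 1) ^ M" by (simp add: card_lists_length_eq)
  finally show ?thesis .
qed

text \<open>Each point of an external \<open>e/2\<close>-net that is \<open>e/2\<close>-close to \<open>C\<close> is replaced by such a point
  of \<open>C\<close>; by the triangle inequality this gives an \<open>e\<close>-covering.\<close>
lemma covering_number_le_external_net:
  fixes C :: "'a::metric_space set"
  assumes "finite Y" and net: "\<forall>x\<in>C. \<exists>y\<in>Y. dist x y \<le> e / 2"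
  shows "covering_number C e \<le> enat (card Y)"
proof -
  define Y' where "Y' = {y\<in>Y. \<exists>x\<in>C. dist x y \<le> e / 2}"
  define s where "s y = (SOME x. x \<in> C \<and> dist x y \<le> e / 2)" for y
  have s: "s y \<in> C \<and> dist (s y) y \<le> e / 2" if "y \<in> Y'" for y
    unfolding s_def by (rule someI_ex) (use that Y'_def in auto)
  have "finite Y'" using assms(1) by (simp add: Y'_def)
  have "is_covering C e (s ` Y')"
    unfolding is_covering_def
  proof (intro conjI ballI)
    show "finite (s ` Y')" using \<open>finite Y'\<close> by simp
    show "s ` Y' \<subseteq> C" using s by auto
    fix x assume x: "x \<in> C"
    then obtain y where y: "y \<in> Y" "dist x y \<le> e / 2" using net by blast
    then have "y \<in> Y'" using x by (auto simp: Y'_def)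
    have "dist x (s y) \<le> dist x y + dist (s y) y" by (rule dist_triangle2)
    also have "\<dots> \<le> e" using s[OF \<open>y \<in> Y'\<close>] y by simp
    finally show "\<exists>z\<in>s ` Y'. dist x z \<le> e" using \<open>y \<in> Y'\<close> by blast
  qed
  then have "covering_number C e \<le> enat (card (s ` Y'))"
    unfolding covering_number_def by (intro Inf_lower) blast
  also have "card (s ` Y') \<le> card Y"
    using card_image_le[OF \<open>finite Y'\<close>, of s] card_mono[OF assms(1), of Y'] by (auto simp: Y'_def)
  finally show ?thesis by simp
qed

lemma span_bounded_net:
  fixes S :: "'a::real_inner set"
  assumes "finite S" "card S \<le> M" "\<delta> > 0" "R \<ge> 0"
  shows "\<exists>Y. finite Y \<and> card Y \<le> nat (2 * \<lceil>R / \<delta>\<rceil> + 1) ^ M \<and>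
           (\<forall>x\<in>span S. norm x \<le> R \<longrightarrow> (\<exists>y\<in>Y. dist x y \<le> sqrt M * \<delta>))"
proof -
  obtain B where B: "finite B" "card B \<le> card S" "\<forall>b\<in>B. norm b = 1" "pairwise orthogonal B"
    "S \<subseteq> span B"
    using exists_orthonormal_spanning_set[OF assms(1)] by blast
  define K where "K = \<lceil>R / \<delta>\<rceil>"
  define Y where "Y = (\<lambda>k. \<Sum>b\<in>B. (\<delta> * of_int (k b)) *\<^sub>R b) ` (B \<rightarrow>\<^sub>E {-K..K})"
  have "card B \<le> M" using B(2) assms(2) by linarith
  have "K \<ge> 0" using assms(3,4) by (simp add: K_def less_le_trans[of "-1" 0])
  have "card Y \<le> card (B \<rightarrow>\<^sub>E {-K..K})"
    unfolding Y_def by (rule card_image_le) (use B(1) in \<open>auto intro: finite_PiE\<close>)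
  also have "\<dots> = nat (2 * K + 1) ^ card B" using B(1) by (simp add: card_PiE)
  also have "\<dots> \<le> nat (2 * K + 1) ^ M"
    using \<open>card B \<le> M\<close> \<open>K \<ge> 0\<close> by (intro power_increasing) auto
  finally have "card Y \<le> nat (2 * K + 1) ^ M" .
  moreover have "\<exists>y\<in>Y. dist x y \<le> sqrt M * \<delta>" if x: "x \<in> span S" "norm x \<le> R" for x
  proof -
    have "x \<in> span B" using x(1) B(5) by (metis span_mono span_span subsetD)
    then obtain k where "k \<in> B \<rightarrow>\<^sub>E {-K..K}"
      and k: "norm (x - (\<Sum>b\<in>B. (\<delta> * of_int (k b)) *\<^sub>R b)) \<le> sqrt (card B) * \<delta>"
      using orthonormal_grid_net[OF B(1,3,4) _ x(2) assms(3)] unfolding K_def by blast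
    moreover have "sqrt (card B) * \<delta> \<le> sqrt M * \<delta>"
      using \<open>card B \<le> M\<close> assms(3) by (intro mult_right_mono) auto
    moreover have "(\<Sum>b\<in>B. (\<delta> * of_int (k b)) *\<^sub>R b) \<in> Y"
      using \<open>k \<in> B \<rightarrow>\<^sub>E {-K..K}\<close> by (simp add: Y_def)
    ultimately show ?thesis unfolding dist_norm by (meson order_trans)
  qed
  moreover have "finite Y" using B(1) by (simp add: Y_def finite_PiE)
  ultimately show ?thesis unfolding K_def[symmetric] by (intro exI[of _ Y]) simp
qed

lemma zero_in_Sigma_pi: "0 \<in> Sigma_pi phi p M"
  unfolding Sigma_pi_def by (rule CollectI, rule exI[of _ "{}"]) auto

lemma Sigma_pi_bounded_net:
  fixes phi :: "nat \<Rightarrow> 'a::real_inner"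
  assumes "\<delta> > 0" "R \<ge> 0"
  shows "\<exists>Y. finite Y \<and> card Y \<le> ((p M + 1) * nat (2 * \<lceil>R / \<delta>\<rceil> + 1)) ^ M \<and>
           (\<forall>g\<in>Sigma_pi phi p M. norm g \<le> R \<longrightarrow> (\<exists>y\<in>Y. dist g y \<le> sqrt M * \<delta>))"
proof -
  define Subs where "Subs = {I. I \<subseteq> {1..p M} \<and> card I \<le> M}"
  define N where "N = nat (2 * \<lceil>R / \<delta>\<rceil> + 1) ^ M"
  have finite_Subs: "finite Subs" by (rule finite_subset[of _ "Pow {1..p M}"]) (auto simp: Subs_def)
  have finite_I: "finite I" if "I \<in> Subs" for I
    using that finite_subset[of I "{1..p M}"] by (auto simp: Subs_def)
  have "\<forall>I\<in>Subs. \<exists>Y. finite Y \<and> card Y \<le> N \<and>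
      (\<forall>x\<in>span (phi ` I). norm x \<le> R \<longrightarrow> (\<exists>y\<in>Y. dist x y \<le> sqrt M * \<delta>))"
  proof
    fix I assume "I \<in> Subs"
    then have card_le: "card (phi ` I) \<le> M"
      using card_image_le[OF finite_I[OF \<open>I \<in> Subs\<close>], of phi] by (simp add: Subs_def)
    show "\<exists>Y. finite Y \<and> card Y \<le> N \<and>
        (\<forall>x\<in>span (phi ` I). norm x \<le> R \<longrightarrow> (\<exists>y\<in>Y. dist x y \<le> sqrt M * \<delta>))"
      unfolding N_def
      by (rule span_bounded_net[OF finite_imageI[OF finite_I[OF \<open>I \<in> Subs\<close>]] card_le assms])
  qed
  then obtain Yof where Yof: "\<forall>I\<in>Subs. finite (Yof I) \<and> card (Yof I) \<le> N \<and>
      (\<forall>x\<in>span (phi ` I). norm x \<le> R \<longrightarrow> (\<exists>y\<in>Yof I. dist x y \<le> sqrt M * \<delta>))"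
    by (rule bchoice[THEN exE])
  define Y where "Y = (\<Union>I\<in>Subs. Yof I)"
  have "finite Y" using Yof finite_Subs by (simp add: Y_def)
  have "card Y \<le> (\<Sum>I\<in>Subs. card (Yof I))" unfolding Y_def by (rule card_UN_le[OF finite_Subs])
  also have "\<dots> \<le> card Subs * N" using Yof sum_mono[of Subs "\<lambda>I. card (Yof I)" "\<lambda>_. N"] by simp
  also have "\<dots> \<le> (p M + 1) ^ M * N"
    using card_bounded_subsets_le[of "p M" M] by (simp add: Subs_def)
  finally have "card Y \<le> ((p M + 1) * nat (2 * \<lceil>R / \<delta>\<rceil> + 1)) ^ M"
    by (simp only: N_def power_mult_distrib)
  moreover have "\<exists>y\<in>Y. dist g y \<le> sqrt M * \<delta>" if g: "g \<in> Sigma_pi phi p M" "norm g \<le> R" for g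
  proof -
    obtain I c where I: "I \<in> Subs" and g_eq: "g = (\<Sum>i\<in>I. c i *\<^sub>R phi i)"
      using g(1) by (auto simp: Sigma_pi_def Subs_def)
    have "g \<in> span (phi ` I)" unfolding g_eq by (intro span_sum span_mul span_base) auto
    then obtain y where "y \<in> Yof I" "dist g y \<le> sqrt M * \<delta>" using Yof I g(2) by blast
    then show ?thesis using I by (auto simp: Y_def)
  qed
  ultimately show ?thesis using \<open>finite Y\<close> by (intro exI[of _ Y]) simp
qed

lemma infdist_lessE:
  assumes "A \<noteq> {}" "infdist x A < e"
  obtains a where "a \<in> A" "dist x a < e"
proof -
  have "(INF a\<in>A. dist x a) < e" using assms by (simp add: infdist_notempty)
  moreover have "bdd_below (dist x ` A)" by (rule bdd_belowI[of _ 0]) auto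
  ultimately show ?thesis using cINF_less_iff[OF assms(1), of "dist x"] that by blast
qed

text \<open>Every \<open>f\<close> of the class is \<open>\<epsilon>/4\<close>-close to an \<open>M\<close>-term approximant of norm at most
  \<open>\<beta> + 1\<close>, which in turn is \<open>\<epsilon>/4\<close>-close to the grid of mesh \<open>\<epsilon>/(4M)\<close> in its coordinate subspace.\<close>
lemma covering_number_approx_class_le:
  fixes phi :: "nat \<Rightarrow> 'a::real_inner"
  assumes eps: "0 < eps" "eps \<le> 1" and "beta \<ge> 0"
    and M: "M \<ge> 1" "beta \<le> eps / 8 * real M powr alpha"
  shows "covering_number (approx_class alpha phi p beta) eps
           \<le> enat (((p M + 1) * nat (2 * \<lceil>4 * (beta + 1) * real M / eps\<rceil> + 1)) ^ M)"
proof -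
  define \<delta> where "\<delta> = eps / (4 * real M)"
  have "\<delta> > 0" using eps M by (simp add: \<delta>_def)
  have "(beta + 1) / \<delta> = 4 * (beta + 1) * real M / eps" by (simp add: \<delta>_def)
  then obtain Y where "finite Y"
    and card_Y: "card Y \<le> ((p M + 1) * nat (2 * \<lceil>4 * (beta + 1) * real M / eps\<rceil> + 1)) ^ M"
    and net: "\<forall>g\<in>Sigma_pi phi p M. norm g \<le> beta + 1 \<longrightarrow> (\<exists>y\<in>Y. dist g y \<le> sqrt M * \<delta>)"
    using Sigma_pi_bounded_net[OF \<open>\<delta> > 0\<close>, of "beta + 1" p M phi] \<open>beta \<ge> 0\<close> by auto
  have mesh: "sqrt M * \<delta> \<le> eps / 4"
  proof -
    have "sqrt M * \<delta> = eps / (4 * sqrt M)"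
      using M by (simp add: \<delta>_def field_simps flip: real_sqrt_mult)
    also have "\<dots> \<le> eps / 4" using M eps by (simp add: divide_le_eq)
    finally show ?thesis .
  qed
  have "\<exists>y\<in>Y. dist f y \<le> eps / 2" if f: "f \<in> approx_class alpha phi p beta" for f
  proof -
    have "norm f \<le> beta" "real M powr alpha * infdist f (Sigma_pi phi p M) \<le> beta"
      using f M by (auto simp: approx_class_def)
    moreover have "beta \<le> real M powr alpha * (eps / 8)" using M(2) by (simp add: mult.commute)
    ultimately have "real M powr alpha * infdist f (Sigma_pi phi p M) \<le> real M powr alpha * (eps / 8)"
      by linarith
    then have "infdist f (Sigma_pi phi p M) < eps / 4" using M eps by simp
    moreover have "Sigma_pi phi p M \<noteq> {}" using zero_in_Sigma_pi by blast
    ultimately obtain g where g: "g \<in> Sigma_pi phi p M" "dist f g < eps / 4"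
      using infdist_lessE by blast
    have "norm g \<le> norm f + dist f g"
      using norm_triangle_sub[of g f] by (simp add: dist_norm norm_minus_commute)
    then have "norm g \<le> beta + 1" using \<open>norm f \<le> beta\<close> g(2) eps by simp
    then obtain y where "y \<in> Y" "dist g y \<le> sqrt M * \<delta>" using net g(1) by blast
    moreover have "dist f y \<le> eps / 2"
      using dist_triangle[of f y g] g(2) mesh \<open>dist g y \<le> sqrt M * \<delta>\<close> by linarith
    ultimately show ?thesis by blast
  qed
  then have "covering_number (approx_class alpha phi p beta) eps \<le> enat (card Y)"
    by (intro covering_number_le_external_net[OF \<open>finite Y\<close>]) blast
  then show ?thesis using card_Y by (simp add: order_trans)
qed

lemma sparsity_level:
  fixes alpha beta eps :: real
  assumes "alpha > 0" "beta > 0" "0 < eps" "eps \<le> 1"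
  defines "M \<equiv> nat \<lceil>((8 * beta + 1) / eps) powr (1 / alpha)\<rceil>"
  shows "M \<ge> 1" and "beta \<le> eps / 8 * real M powr alpha"
    and "real M \<le> ((8 * beta + 1) powr (1 / alpha) + 1) * (1 / eps) powr (1 / alpha)"
proof -
  define t where "t = ((8 * beta + 1) / eps) powr (1 / alpha)"
  have "t > 0" using assms by (simp add: t_def)
  have M_ge: "real M \<ge> t" unfolding M_def t_def by (rule real_nat_ceiling_ge)
  have "real M > 0" using M_ge \<open>t > 0\<close> by linarith
  then show "M \<ge> 1" by simp
  have "(8 * beta + 1) / eps = t powr alpha"
    using assms by (simp add: t_def powr_powr)
  also have "\<dots> \<le> real M powr alpha" using M_ge \<open>t > 0\<close> assms(1) by (intro powr_mono2) auto
  finally have "(8 * beta + 1) / eps \<le> real M powr alpha" .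
  then have "8 * beta + 1 \<le> eps * real M powr alpha"
    using assms(3) by (simp add: divide_le_eq mult.commute)
  then show "beta \<le> eps / 8 * real M powr alpha" by simp
  have "1 \<le> (1 / eps) powr (1 / alpha)" using assms by (simp add: ge_one_powr_ge_zero)
  moreover have "real M \<le> t + 1"
    unfolding M_def using \<open>t > 0\<close> by (simp add: t_def)
  moreover have "t = (8 * beta + 1) powr (1 / alpha) * (1 / eps) powr (1 / alpha)"
    using assms by (simp add: t_def flip: powr_mult)
  ultimately show "real M \<le> ((8 * beta + 1) powr (1 / alpha) + 1) * (1 / eps) powr (1 / alpha)"
    by (simp add: distrib_right)
qed

lemma ln_covering_count_le:
  fixes eps c u Cp R :: real and M P k :: nat
  assumes eps: "0 < eps" "eps \<le> 1" and M: "M \<ge> 1" "real M \<le> c * (1 / eps) powr u"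
    and "u \<ge> 0" "c \<ge> 0" "Cp \<ge> 0" "R \<ge> 0" and P: "real P \<le> Cp * real M ^ k"
  shows "ln (real (((P + 1) * nat (2 * \<lceil>4 * R * real M / eps\<rceil> + 1)) ^ M))
     \<le> c * (1 / eps) powr u
          * (ln ((Cp * c ^ k + 1) * (8 * R * c + 3)) + (u * k + u + 1) * ln (1 / eps))"
proof -
  define x where "x = 1 / eps"
  define A where "A = x powr u"
  define K where "K = \<lceil>4 * R * real M / eps\<rceil>"
  define Q where "Q = (P + 1) * nat (2 * K + 1)"
  define E where "E = (Cp * c ^ k + 1) * (8 * R * c + 3)"
  have "x \<ge> 1" using eps by (simp add: x_def)
  have "A \<ge> 1" using \<open>x \<ge> 1\<close> \<open>u \<ge> 0\<close> by (simp add: A_def ge_one_powr_ge_zero)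
  have M_le: "real M \<le> c * A" using M by (simp add: A_def x_def)
  have "Cp * real M ^ k \<le> Cp * (c * A) ^ k"
    using M_le \<open>Cp \<ge> 0\<close> by (intro mult_left_mono power_mono) auto
  moreover have "Cp * (c * A) ^ k = Cp * c ^ k * A ^ k" by (simp add: power_mult_distrib)
  moreover have "1 \<le> A ^ k" using \<open>A \<ge> 1\<close> by (rule one_le_power)
  ultimately have P_le: "real (P + 1) \<le> (Cp * c ^ k + 1) * A ^ k"
    using P by (simp add: distrib_right)
  have "0 \<le> 4 * R * real M / eps" using \<open>R \<ge> 0\<close> eps by simp
  then have "K \<ge> 0" by (simp add: K_def)
  have "of_int K \<le> 4 * R * real M * x + 1"
    unfolding K_def x_def using of_int_ceiling_le_add_one by simp
  then have "real (nat (2 * K + 1)) \<le> 8 * R * real M * x + 3" using \<open>K \<ge> 0\<close> by simp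
  also have "\<dots> \<le> 8 * R * (c * A) * x + 3"
    using M_le \<open>R \<ge> 0\<close> \<open>x \<ge> 1\<close> by (intro add_right_mono mult_right_mono mult_left_mono) auto
  also have "\<dots> \<le> (8 * R * c + 3) * A * x"
    using \<open>A \<ge> 1\<close> \<open>x \<ge> 1\<close> mult_mono[of 1 A 1 x] by (simp add: algebra_simps)
  finally have K_le: "real (nat (2 * K + 1)) \<le> (8 * R * c + 3) * A * x" .
  have "real Q \<ge> 1" using \<open>K \<ge> 0\<close> by (simp add: Q_def)
  have "real Q \<le> ((Cp * c ^ k + 1) * A ^ k) * ((8 * R * c + 3) * A * x)"
    unfolding Q_def of_nat_mult using P_le K_le by (intro mult_mono) auto
  also have "\<dots> = E * (A ^ k * A * x)" by (simp add: E_def algebra_simps)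
  finally have "ln (real Q) \<le> ln (E * (A ^ k * A * x))"
    using \<open>real Q \<ge> 1\<close> by simp
  also have "\<dots> = ln E + k * ln A + ln A + ln x"
  proof -
    have "Cp * c ^ k + 1 > 0" "8 * R * c + 3 > 0"
      using \<open>Cp \<ge> 0\<close> \<open>c \<ge> 0\<close> \<open>R \<ge> 0\<close> by (simp_all add: add_nonneg_pos)
    then show ?thesis using \<open>A \<ge> 1\<close> \<open>x \<ge> 1\<close> by (simp add: E_def ln_mult ln_realpow)
  qed
  also have "\<dots> = ln E + (u * k + u + 1) * ln x"
    using \<open>x \<ge> 1\<close> by (simp add: A_def ln_powr algebra_simps)
  finally have lnQ: "ln (real Q) \<le> ln E + (u * k + u + 1) * ln x" .
  have "real M * ln (real Q) \<le> c * A * (ln E + (u * k + u + 1) * ln x)"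
    using M_le lnQ \<open>real Q \<ge> 1\<close> by (intro mult_mono) auto
  then show ?thesis
    using \<open>real Q \<ge> 1\<close> by (simp add: Q_def K_def E_def A_def x_def ln_realpow)
qed

lemma entropy_boundI:
  fixes C :: "'a::metric_space set" and N :: "real \<Rightarrow> nat"
  assumes cover: "\<forall>\<^sub>F eps in at_right 0. covering_number C eps \<le> enat (N eps)"
    and ln_le: "\<forall>\<^sub>F eps in at_right 0. ln (real (N eps)) \<le> B eps"
    and B: "B \<in> O[at_right 0](\<lambda>eps. eps powr (-1 / gamma))"
  shows "entropy_bound C gamma"
proof -
  have "\<forall>\<^sub>F eps in at_right 0. covering_number C eps \<noteq> \<infinity> \<and>
      norm (log 2 (real (the_enat (covering_number C eps)))) \<le> 1 / ln 2 * norm (B eps)"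
    using cover ln_le
  proof eventually_elim
    case (elim eps)
    then obtain n where n: "covering_number C eps = enat n" "n \<le> N eps"
      by (cases "covering_number C eps") auto
    have "ln (real (N eps)) \<ge> 0" by (cases "N eps = 0") auto
    have "\<bar>log 2 (real n)\<bar> \<le> ln (real (N eps)) / ln 2"
    proof (cases "n = 0")
      case True
      then show ?thesis using \<open>ln (real (N eps)) \<ge> 0\<close> by (simp add: log_def)
    next
      case False
      then show ?thesis using n(2) by (simp add: log_def divide_right_mono)
    qed
    also have "\<dots> \<le> \<bar>B eps\<bar> / ln 2" using elim(2) by (intro divide_right_mono) auto
    finally show ?case using n(1) by simp
  qed
  then have "(\<lambda>eps. log 2 (real (the_enat (covering_number C eps)))) \<in> O[at_right 0](B)"
    by (intro bigoI[of _ "1 / ln 2"]) (auto elim: eventually_mono)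
  then have "(\<lambda>eps. log 2 (real (the_enat (covering_number C eps))))
      \<in> O[at_right 0](\<lambda>eps. eps powr (-1 / gamma))"
    using B by (rule landau_o.big_trans)
  moreover have "\<forall>\<^sub>F eps in at_right 0. covering_number C eps \<noteq> \<infinity>"
    using cover by (rule eventually_mono) (auto simp: enat_ile)
  ultimately show ?thesis by (simp add: entropy_bound_def)
qed

lemma encoding_speed_ge:
  assumes "C \<noteq> {}" "alpha > 0"
    and entropy: "\<And>gamma. 0 < gamma \<Longrightarrow> gamma < alpha \<Longrightarrow> entropy_bound C gamma"
  shows "encoding_speed C \<ge> ereal alpha"
proof -
  define S where "S = {ereal gamma | gamma. gamma > 0 \<and> entropy_bound C gamma}"
  have "ereal alpha \<le> Sup S"
  proof (rule dense_le_bounded[of 0])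
    show "0 < ereal alpha" using assms(2) by simp
    fix w assume w: "0 < w" "w < ereal alpha"
    then obtain gamma where "w = ereal gamma" by (cases w) auto
    then have "w \<in> S" using w entropy by (auto simp: S_def)
    then show "w \<le> Sup S" by (rule Sup_upper)
  qed
  then show ?thesis using assms(1) by (simp add: encoding_speed_def S_def)
qed

lemma approx_class_entropy_bound:
  fixes phi :: "nat \<Rightarrow> 'a::real_inner"
  assumes poly: "\<forall>n\<ge>1. real (p n) \<le> Cp * real n ^ k" and "Cp \<ge> 0"
    and "alpha > 0" "beta > 0" "0 < gamma" "gamma < alpha"
  shows "entropy_bound (approx_class alpha phi p beta) gamma"
proof -
  define u where "u = 1 / alpha"
  define c where "c = (8 * beta + 1) powr u + 1"
  define M where "M eps = nat \<lceil>((8 * beta + 1) / eps) powr u\<rceil>" for eps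
  define N where "N eps = ((p (M eps) + 1)
      * nat (2 * \<lceil>4 * (beta + 1) * real (M eps) / eps\<rceil> + 1)) ^ M eps" for eps
  define B where "B eps = c * (1 / eps) powr u
      * (ln ((Cp * c ^ k + 1) * (8 * (beta + 1) * c + 3)) + (u * k + u + 1) * ln (1 / eps))" for eps
  have "\<forall>\<^sub>F eps in at_right 0. 0 < eps \<and> eps \<le> (1::real)"
    unfolding eventually_at_right_field by (intro exI[of _ 1]) auto
  then have bounds: "\<forall>\<^sub>F eps in at_right 0.
      covering_number (approx_class alpha phi p beta) eps \<le> enat (N eps) \<and> ln (real (N eps)) \<le> B eps"
  proof eventually_elim
    case (elim eps)
    then have eps: "0 < eps" "eps \<le> 1" by auto
    note level = sparsity_level[OF \<open>alpha > 0\<close> \<open>beta > 0\<close> eps, folded u_def c_def]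
    have "real (p (M eps)) \<le> Cp * real (M eps) ^ k" using poly level(1) unfolding M_def by blast
    then have "ln (real (N eps)) \<le> B eps"
      unfolding N_def B_def
      by (intro ln_covering_count_le[OF eps]) 
        (use level \<open>Cp \<ge> 0\<close> \<open>beta > 0\<close> \<open>alpha > 0\<close> in \<open>simp_all add: M_def u_def c_def\<close>)
    moreover have "covering_number (approx_class alpha phi p beta) eps \<le> enat (N eps)"
      unfolding N_def M_def using level \<open>beta > 0\<close>
      by (intro covering_number_approx_class_le[OF eps]) simp_all
    ultimately show ?case by simp
  qed
  have "u > 0" "u < 1 / gamma"
    using assms(3,5,6) by (simp_all add: u_def frac_less2)
  then have B: "B \<in> O[at_right 0](\<lambda>eps. eps powr (-1 / gamma))"
    unfolding B_def by real_asymp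
  show ?thesis
    by (rule entropy_boundI[where N = N, OF eventually_mono[OF bounds] eventually_mono[OF bounds] B])
      simp_all
qed

theorem mainTheorem16:
  fixes phi :: "nat \<Rightarrow> 'a::{real_inner, complete_space}"
    and p :: "nat \<Rightarrow> nat" and alpha beta :: real
  assumes poly: "\<exists>C k. \<forall>n\<ge>1. real (p n) \<le> C * real n ^ k"
    and "alpha > 0" and "beta > 0"
  shows "encoding_speed (approx_class alpha phi p beta) \<ge> ereal alpha"
proof (rule encoding_speed_ge)
  have "0 \<in> approx_class alpha phi p beta"
    using \<open>beta > 0\<close> by (simp add: approx_class_def zero_in_Sigma_pi)
  then show "approx_class alpha phi p beta \<noteq> {}" by blast
  obtain C k where C: "\<forall>n\<ge>1. real (p n) \<le> C * real n ^ k" using poly by blast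
  have "real (p n) \<le> max C 0 * real n ^ k" if "n \<ge> 1" for n
  proof -
    have "real (p n) \<le> C * real n ^ k" using C that by blast
    also have "\<dots> \<le> max C 0 * real n ^ k" by (intro mult_right_mono) auto
    finally show ?thesis .
  qed
  then show "entropy_bound (approx_class alpha phi p beta) gamma"
    if "0 < gamma" "gamma < alpha" for gamma
    using approx_class_entropy_bound[of p "max C 0" k] \<open>alpha > 0\<close> \<open>beta > 0\<close> that by simp
qed (rule \<open>alpha > 0\<close>)

end
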